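(* Let $\mathcal B\subseteq P(D)$ be a Boolean algebra with $|\mathcal B|<\mathfrak b$ and $\mathcal A_0\subseteq\mathcal B$, and let $\nu$ be a finitely additive almost strictly positive probability measure on $\mathcal B$ extending $\mu_0$. Let $\mathcal S=\{S_n:n\in\omega\}$ be an $s$-family. Then there exists $g\in\omega^\omega$ such that, for $X_g=\bigcup_{n\in\omega}S_n(g(n))$, the set $D\setminus X_g$ is infinite and $\nu$ extends to an almost strictly positive finitely additive measure on the algebra $\mathcal B[X_g]$ generated by $\mathcal B\cup\{X_g\}$.
   Context: $\mathfrak b$ is the bounding number. $\lambda$ is the product measure on $2^\omega$, $D\subseteq 2^\omega$ a fixed countable dense set, $\mathcal A_0$ the subalgebra of $P(D)$ generated by $\{C\cap D: C \text{ clopen}\}$ and the finite subsets of $D$, $\mu_0$ the finitely additive measure on $\mathcal A_0$ with $\mu_0((C\cap D)\triangle F)=\lambda(C)$ for $C$ clopen, $F$ finite. An $s$-family is a countable family $\mathcal S$ of sequences $(S(k))_{k\in\omega}$ of elements of $\mathcal A_0$ with $S(0)\supseteq S(1)\supseteq\cdots$, $\bigcap_kS(k)=\emptyset$, $\lim_k\mu_0(S(k))=0$. A finitely additive measure on an algebra $\mathcal C\subseteq P(D)$ is almost strictly positive if for $C\in\mathcal C$, its value at $C$ is $0$ iff $C$ is finite. *)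

theory Defs
  imports "HOL-Probability.Probability"
begin

text \<open>Cantor space 2^omega is the type nat => bool with the product topology
 (bool carries its order topology, which is discrete).\<close>

definition cantor_clopen :: "(nat \<Rightarrow> bool) set \<Rightarrow> bool" where
  "cantor_clopen C \<longleftrightarrow> open C \<and> closed C"

definition cantor_measure :: "(nat \<Rightarrow> bool) measure" where
  "cantor_measure = (\<Pi>\<^sub>M i\<in>(UNIV::nat set). measure_pmf (pmf_of_set (UNIV::bool set)))"

definition lam :: "(nat \<Rightarrow> bool) set \<Rightarrow> real" where
  "lam C = measure cantor_measure C"

definition sdiff :: "'a set \<Rightarrow> 'a set \<Rightarrow> 'a set" where
  "sdiff A B = (A - B) \<union> (B - A)"

definition is_alg :: "'a set \<Rightarrow> 'a set set \<Rightarrow> bool" where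
  "is_alg D B \<longleftrightarrow> B \<subseteq> Pow D \<and> {} \<in> B \<and> (\<forall>a\<in>B. D - a \<in> B) \<and> (\<forall>a\<in>B. \<forall>b\<in>B. a \<union> b \<in> B)"

definition gen_alg :: "'a set \<Rightarrow> 'a set set \<Rightarrow> 'a set set" where
  "gen_alg D G = \<Inter>{B. is_alg D B \<and> G \<subseteq> B}"

definition A0 :: "(nat \<Rightarrow> bool) set \<Rightarrow> (nat \<Rightarrow> bool) set set" where
  "A0 D = gen_alg D ({C \<inter> D | C. cantor_clopen C} \<union> {F. finite F \<and> F \<subseteq> D})"

definition mu0 :: "(nat \<Rightarrow> bool) set \<Rightarrow> (nat \<Rightarrow> bool) set \<Rightarrow> real" where
  "mu0 D A = (SOME r. \<exists>C F. cantor_clopen C \<and> finite F \<and> F \<subseteq> D \<and>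
                 A = sdiff (C \<inter> D) F \<and> r = lam C)"

definition fin_add_measure :: "'a set set \<Rightarrow> ('a set \<Rightarrow> real) \<Rightarrow> bool" where
  "fin_add_measure B m \<longleftrightarrow> (\<forall>a\<in>B. 0 \<le> m a) \<and>
     (\<forall>a\<in>B. \<forall>b\<in>B. a \<inter> b = {} \<longrightarrow> m (a \<union> b) = m a + m b)"

definition almost_strictly_positive :: "'a set set \<Rightarrow> ('a set \<Rightarrow> real) \<Rightarrow> bool" where
  "almost_strictly_positive B m \<longleftrightarrow> (\<forall>a\<in>B. m a = 0 \<longleftrightarrow> finite a)"

text \<open>|A| < b, the bounding number: |A| is smaller than the cardinality of every
 unbounded family in omega^omega (unbounded w.r.t. eventual domination).\<close>
definition dominated :: "(nat \<Rightarrow> nat) set \<Rightarrow> bool" where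
  "dominated F \<longleftrightarrow> (\<exists>g. \<forall>f\<in>F. \<exists>N. \<forall>n\<ge>N. f n \<le> g n)"

definition card_less_b :: "'a set \<Rightarrow> bool" where
  "card_less_b A \<longleftrightarrow> (\<forall>F::(nat \<Rightarrow> nat) set. \<not> dominated F \<longrightarrow> (card_of A, card_of F) \<in> ordLess)"

text \<open>s-family indexed as S n k (n-th sequence, k-th term).\<close>
definition s_family :: "(nat \<Rightarrow> bool) set \<Rightarrow> (nat \<Rightarrow> nat \<Rightarrow> (nat \<Rightarrow> bool) set) \<Rightarrow> bool" where
  "s_family D S \<longleftrightarrow> (\<forall>n. (\<forall>k. S n k \<in> A0 D) \<and> (\<forall>k. S n (Suc k) \<subseteq> S n k) \<and>
      (\<Inter>k. S n k) = {} \<and> (\<lambda>k. mu0 D (S n k)) \<longlonglongrightarrow> 0)"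

end

theory Submission
  imports Defs
begin

text \<open>
  Write \<open>X = (\<Union>n. S n (g n))\<close> and \<open>U j = (\<Union>n<j. S n (g n))\<close>. Since \<open>|B|\<close> is below the
  bounding number, one \<open>g\<close> eventually dominates a function computed from \<open>C\<close>, for all \<open>C \<in> B\<close>
  simultaneously; this makes \<open>S m (g m)\<close>, for all large \<open>m\<close>, (i) miss \<open>C\<close> whenever \<open>C \<inter> S m k\<close>
  is empty for large \<open>k\<close>, (ii) have measure at most \<open>\<nu> (C - U m) / 2^(m+2)\<close>, and (iii) avoid a
  chosen point of \<open>C - U L\<close>. By (iii) every \<open>e \<in> B\<close> inside \<open>X\<close> is almost contained in some
  \<open>U j\<close>; by (i) an infinite trace \<open>A \<inter> X\<close> contains an infinite member of \<open>B\<close>; and by (ii) the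
  measures \<open>\<nu> (C - U j)\<close> stay above some \<open>\<delta> > 0\<close> when \<open>C - X\<close> is infinite, so that the inner
  measure of \<open>C \<inter> X\<close> is at most \<open>\<nu> C - \<delta>\<close>. Under these three conditions, with \<open>\<nu>\<^sub>*\<close> the inner
  measure, \<open>\<nu>' ((A \<inter> X) \<union> (C - X)) = \<nu>\<^sub>* (A \<inter> X) + (\<nu> C - \<nu>\<^sub>* (C \<inter> X))\<close> is a well-defined almost
  strictly positive extension of \<open>\<nu>\<close> to \<open>B[X]\<close>. Finally, requiring also \<open>\<nu> (S m (g m)) \<le> 1 / 2^(m+2)\<close>
  keeps \<open>\<nu> (U j) \<le> 1/2\<close>, which forces \<open>D - X\<close> to be infinite.
\<close>

section \<open>Finitely additive probabilities on algebras of sets\<close>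

lemma gen_alg_superset: "G \<subseteq> gen_alg D G"
  unfolding gen_alg_def by blast

lemma gen_alg_least: "is_alg D B \<Longrightarrow> G \<subseteq> B \<Longrightarrow> gen_alg D G \<subseteq> B"
  unfolding gen_alg_def by blast

locale fa_prob_algebra =
  fixes D :: "'a set" and B :: "'a set set" and \<nu> :: "'a set \<Rightarrow> real"
  assumes alg: "is_alg D B" and additive: "fin_add_measure B \<nu>"
    and asp: "almost_strictly_positive B \<nu>" and prob: "\<nu> D = 1"
    and finite_in: "\<And>F. finite F \<Longrightarrow> F \<subseteq> D \<Longrightarrow> F \<in> B"
begin

lemma sets_sub: "b \<in> B \<Longrightarrow> b \<subseteq> D"
  using alg unfolding is_alg_def by auto

lemma empty_in: "{} \<in> B"
  using alg unfolding is_alg_def by auto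

lemma compl_in: "b \<in> B \<Longrightarrow> D - b \<in> B"
  using alg unfolding is_alg_def by auto

lemma Un_in: "a \<in> B \<Longrightarrow> b \<in> B \<Longrightarrow> a \<union> b \<in> B"
  using alg unfolding is_alg_def by auto

lemma space_in: "D \<in> B"
  using compl_in[OF empty_in] by simp

lemma Int_in:
  assumes "a \<in> B" "b \<in> B" shows "a \<inter> b \<in> B"
proof -
  have "a \<inter> b = D - ((D - a) \<union> (D - b))"
    using sets_sub assms by auto
  thus ?thesis using assms by (simp add: compl_in Un_in)
qed

lemma Diff_in:
  assumes "a \<in> B" "b \<in> B" shows "a - b \<in> B"
proof -
  have "a - b = a \<inter> (D - b)"
    using sets_sub assms by auto
  thus ?thesis using assms by (simp add: compl_in Int_in)
qed

lemma nu_Un: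
  "a \<in> B \<Longrightarrow> b \<in> B \<Longrightarrow> a \<inter> b = {} \<Longrightarrow> \<nu> (a \<union> b) = \<nu> a + \<nu> b"
  using additive unfolding fin_add_measure_def by auto

lemma nu_nonneg: "a \<in> B \<Longrightarrow> 0 \<le> \<nu> a"
  using additive unfolding fin_add_measure_def by auto

lemma nu_zero_iff: "a \<in> B \<Longrightarrow> \<nu> a = 0 \<longleftrightarrow> finite a"
  using asp unfolding almost_strictly_positive_def by auto

lemma nu_finite: "a \<in> B \<Longrightarrow> finite a \<Longrightarrow> \<nu> a = 0"
  using nu_zero_iff by auto

lemma nu_pos: "a \<in> B \<Longrightarrow> infinite a \<Longrightarrow> 0 < \<nu> a"
  using nu_zero_iff nu_nonneg by (metis order_le_less)

lemma nu_split:
  assumes "a \<in> B" "b \<in> B" shows "\<nu> a = \<nu> (a \<inter> b) + \<nu> (a - b)"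
proof -
  have "\<nu> a = \<nu> ((a \<inter> b) \<union> (a - b))"
    by (simp add: Int_Diff_Un)
  also have "\<dots> = \<nu> (a \<inter> b) + \<nu> (a - b)"
    by (rule nu_Un) (auto simp: assms Int_in Diff_in)
  finally show ?thesis .
qed

lemma nu_mono:
  assumes "a \<in> B" "b \<in> B" "a \<subseteq> b" shows "\<nu> a \<le> \<nu> b"
proof -
  have "\<nu> b = \<nu> a + \<nu> (b - a)"
    using nu_split[OF assms(2,1)] assms(3) by (simp add: Int_absorb1)
  thus ?thesis using nu_nonneg[OF Diff_in[OF assms(2,1)]] by simp
qed

lemma nu_le_one: "a \<in> B \<Longrightarrow> \<nu> a \<le> 1"
  using nu_mono[OF _ space_in] sets_sub prob by auto

lemma nu_subadditive:
  assumes "a \<in> B" "b \<in> B" shows "\<nu> (a \<union> b) \<le> \<nu> a + \<nu> b"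
proof -
  have "\<nu> (a \<union> b) = \<nu> a + \<nu> (b - a)"
    using nu_Un[OF assms(1) Diff_in[OF assms(2,1)]] by simp
  moreover have "\<nu> (b - a) \<le> \<nu> b"
    using nu_mono assms Diff_in by auto
  ultimately show ?thesis by simp
qed

lemma nu_Diff_ge: "a \<in> B \<Longrightarrow> b \<in> B \<Longrightarrow> \<nu> a - \<nu> b \<le> \<nu> (a - b)"
  using nu_split[of a b] nu_mono[of "a \<inter> b" b] Int_in by auto

end

section \<open>Adjoining a set to the algebra\<close>

locale adjoinable = fa_prob_algebra +
  fixes X :: "'a set"
  assumes X_sub: "X \<subseteq> D"
    and infinite_trace: "\<And>A. A \<in> B \<Longrightarrow> infinite (A \<inter> X) \<Longrightarrow> \<exists>b\<in>B. b \<subseteq> A \<inter> X \<and> infinite b"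
    and inner_gap: "\<And>C. C \<in> B \<Longrightarrow> infinite (C - X) \<Longrightarrow>
                      \<exists>\<delta>>0. \<forall>e\<in>B. e \<subseteq> C \<inter> X \<longrightarrow> \<nu> e \<le> \<nu> C - \<delta>"
begin

definition inner :: "'a set \<Rightarrow> real" where
  "inner Y = Sup {\<nu> b | b. b \<in> B \<and> b \<subseteq> Y}"

lemma inner_ge: "b \<in> B \<Longrightarrow> b \<subseteq> Y \<Longrightarrow> \<nu> b \<le> inner Y"
  unfolding inner_def
  by (rule cSup_upper) (auto intro!: bdd_aboveI[of _ 1] nu_le_one)

lemma inner_le: "(\<And>b. b \<in> B \<Longrightarrow> b \<subseteq> Y \<Longrightarrow> \<nu> b \<le> r) \<Longrightarrow> inner Y \<le> r"
  unfolding inner_def by (rule cSup_least) (use empty_in in auto)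

lemma inner_nonneg: "0 \<le> inner Y"
  using inner_ge[OF empty_in, of Y] nu_finite[OF empty_in] by simp

lemma inner_eq_measure: "b \<in> B \<Longrightarrow> inner b = \<nu> b"
  by (rule antisym[OF inner_le inner_ge]) (auto intro: nu_mono)

lemma inner_trace_le: "c \<in> B \<Longrightarrow> inner (c \<inter> X) \<le> \<nu> c"
  by (rule inner_le) (auto intro: nu_mono)

lemma inner_finite: "finite Y \<Longrightarrow> inner Y = 0"
  by (rule antisym[OF inner_le inner_nonneg]) (metis nu_finite finite_subset order_refl)

lemma inner_trace_Un:
  assumes a1: "a1 \<in> B" and a2: "a2 \<in> B" and disj: "a1 \<inter> a2 = {}"
  shows "inner ((a1 \<union> a2) \<inter> X) = inner (a1 \<inter> X) + inner (a2 \<inter> X)"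
proof (rule antisym)
  show "inner ((a1 \<union> a2) \<inter> X) \<le> inner (a1 \<inter> X) + inner (a2 \<inter> X)"
  proof (rule inner_le)
    fix b assume b: "b \<in> B" "b \<subseteq> (a1 \<union> a2) \<inter> X"
    have "b = (b \<inter> a1) \<union> (b \<inter> a2)" using b(2) by auto
    hence "\<nu> b = \<nu> (b \<inter> a1) + \<nu> (b \<inter> a2)"
      using nu_Un[OF Int_in[OF b(1) a1] Int_in[OF b(1) a2]] disj by auto
    moreover have "\<nu> (b \<inter> a1) \<le> inner (a1 \<inter> X)" "\<nu> (b \<inter> a2) \<le> inner (a2 \<inter> X)"
      using b a1 a2 by (auto intro!: inner_ge Int_in)
    ultimately show "\<nu> b \<le> inner (a1 \<inter> X) + inner (a2 \<inter> X)" by linarith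
  qed
next
  have "inner (a1 \<inter> X) \<le> inner ((a1 \<union> a2) \<inter> X) - inner (a2 \<inter> X)"
  proof (rule inner_le)
    fix b1 assume b1: "b1 \<in> B" "b1 \<subseteq> a1 \<inter> X"
    have "inner (a2 \<inter> X) \<le> inner ((a1 \<union> a2) \<inter> X) - \<nu> b1"
    proof (rule inner_le)
      fix b2 assume b2: "b2 \<in> B" "b2 \<subseteq> a2 \<inter> X"
      have "\<nu> b1 + \<nu> b2 = \<nu> (b1 \<union> b2)"
        by (rule nu_Un[symmetric]) (use b1 b2 disj in auto)
      also have "\<dots> \<le> inner ((a1 \<union> a2) \<inter> X)"
        by (rule inner_ge) (use b1 b2 Un_in in auto)
      finally show "\<nu> b2 \<le> inner ((a1 \<union> a2) \<inter> X) - \<nu> b1" by linarith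
    qed
    thus "\<nu> b1 \<le> inner ((a1 \<union> a2) \<inter> X) - inner (a2 \<inter> X)" by linarith
  qed
  thus "inner (a1 \<inter> X) + inner (a2 \<inter> X) \<le> inner ((a1 \<union> a2) \<inter> X)" by linarith
qed

text \<open>The mass of \<open>c\<close> not captured inside \<open>X\<close>; it becomes the measure of \<open>c - X\<close>.\<close>

definition outer :: "'a set \<Rightarrow> real" where
  "outer c = \<nu> c - inner (c \<inter> X)"

lemma outer_nonneg: "c \<in> B \<Longrightarrow> 0 \<le> outer c"
  unfolding outer_def using inner_trace_le by simp

lemma outer_Un:
  "c1 \<in> B \<Longrightarrow> c2 \<in> B \<Longrightarrow> c1 \<inter> c2 = {} \<Longrightarrow> outer (c1 \<union> c2) = outer c1 + outer c2"
  unfolding outer_def using nu_Un inner_trace_Un by simp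

lemma outer_subset_X: "c \<in> B \<Longrightarrow> c \<subseteq> X \<Longrightarrow> outer c = 0"
  unfolding outer_def using inner_eq_measure by (simp add: Int_absorb2)

lemma outer_pos: assumes C: "C \<in> B" and inf: "infinite (C - X)" shows "0 < outer C"
proof -
  obtain \<delta> where \<delta>: "\<delta> > 0" "\<forall>e\<in>B. e \<subseteq> C \<inter> X \<longrightarrow> \<nu> e \<le> \<nu> C - \<delta>"
    using inner_gap[OF C inf] by auto
  have "inner (C \<inter> X) \<le> \<nu> C - \<delta>" by (rule inner_le) (use \<delta> in auto)
  thus ?thesis unfolding outer_def using \<delta>(1) by linarith
qed

lemma outer_Int_eq:
  assumes c: "c \<in> B" and c': "c' \<in> B" and eq: "c - X = c' - X"
  shows "outer c = outer (c \<inter> c')"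
proof -
  have "outer c = outer (c \<inter> c') + outer (c - c')"
    using outer_Un[OF Int_in[OF c c'] Diff_in[OF c c']] by (simp add: Int_Diff_Un Int_Diff_disjoint)
  moreover have "outer (c - c') = 0"
    by (rule outer_subset_X[OF Diff_in[OF c c']]) (use eq in blast)
  ultimately show ?thesis by simp
qed

lemma outer_cong: "c \<in> B \<Longrightarrow> c' \<in> B \<Longrightarrow> c - X = c' - X \<Longrightarrow> outer c = outer c'"
  using outer_Int_eq[of c c'] outer_Int_eq[of c' c] by (simp add: Int_commute)

definition adjoined_alg :: "'a set set" where
  "adjoined_alg = {E. \<exists>A\<in>B. \<exists>C\<in>B. E = (A \<inter> X) \<union> (C - X)}"

lemma is_alg_adjoined_alg: "is_alg D adjoined_alg"
  unfolding is_alg_def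
proof (intro conjI ballI)
  show "adjoined_alg \<subseteq> Pow D" unfolding adjoined_alg_def using sets_sub X_sub by blast
  show "{} \<in> adjoined_alg" unfolding adjoined_alg_def using empty_in by blast
next
  fix a assume "a \<in> adjoined_alg"
  then obtain A C where AC: "A \<in> B" "C \<in> B" "a = (A \<inter> X) \<union> (C - X)"
    unfolding adjoined_alg_def by auto
  have "D - a = ((D - A) \<inter> X) \<union> ((D - C) - X)" using AC X_sub by auto
  thus "D - a \<in> adjoined_alg" unfolding adjoined_alg_def using AC compl_in by blast
next
  fix a b assume "a \<in> adjoined_alg" "b \<in> adjoined_alg"
  then obtain A C A' C' where AC: "A \<in> B" "C \<in> B" "a = (A \<inter> X) \<union> (C - X)"
    "A' \<in> B" "C' \<in> B" "b = (A' \<inter> X) \<union> (C' - X)" unfolding adjoined_alg_def by blast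
  have "a \<union> b = ((A \<union> A') \<inter> X) \<union> ((C \<union> C') - X)" using AC by auto
  thus "a \<union> b \<in> adjoined_alg" unfolding adjoined_alg_def using AC Un_in by blast
qed

lemma gen_alg_subset_adjoined_alg: "gen_alg D (B \<union> {X}) \<subseteq> adjoined_alg"
proof (rule gen_alg_least[OF is_alg_adjoined_alg])
  have "A = (A \<inter> X) \<union> (A - X)" for A by auto
  hence "B \<subseteq> adjoined_alg" unfolding adjoined_alg_def by blast
  moreover have "X = (D \<inter> X) \<union> ({} - X)" using X_sub by auto
  hence "X \<in> adjoined_alg" unfolding adjoined_alg_def using space_in empty_in by blast
  ultimately show "B \<union> {X} \<subseteq> adjoined_alg" by blast
qed

definition adjoined_measure :: "'a set \<Rightarrow> real" where
  "adjoined_measure E = inner (E \<inter> X) + outer (SOME c. c \<in> B \<and> c - X = E - X)"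

lemma adjoined_measure_eq:
  assumes A: "A \<in> B" and C: "C \<in> B"
  shows "adjoined_measure ((A \<inter> X) \<union> (C - X)) = inner (A \<inter> X) + outer C"
proof -
  let ?E = "(A \<inter> X) \<union> (C - X)"
  define c where "c = (SOME c. c \<in> B \<and> c - X = ?E - X)"
  have "c \<in> B \<and> c - X = ?E - X" unfolding c_def by (rule someI[of _ C]) (use C in auto)
  hence "outer c = outer C" using outer_cong[OF _ C] by auto
  moreover have "?E \<inter> X = A \<inter> X" by auto
  ultimately show ?thesis unfolding adjoined_measure_def c_def[symmetric] by simp
qed

lemma adjoined_measure_extends: "A \<in> B \<Longrightarrow> adjoined_measure A = \<nu> A"
  using adjoined_measure_eq[of A A] by (simp add: Int_Diff_Un outer_def)

lemma adjoined_measure_Un: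
  assumes a: "a \<in> adjoined_alg" and b: "b \<in> adjoined_alg" and disj: "a \<inter> b = {}"
  shows "adjoined_measure (a \<union> b) = adjoined_measure a + adjoined_measure b"
proof -
  obtain A1 C1 A2 C2 where AC: "A1 \<in> B" "C1 \<in> B" "a = (A1 \<inter> X) \<union> (C1 - X)"
    "A2 \<in> B" "C2 \<in> B" "b = (A2 \<inter> X) \<union> (C2 - X)"
    using a b unfolding adjoined_alg_def by blast
  \<comment> \<open>disjoint representatives with the same traces on and off \<open>X\<close>\<close>
  have ab: "a \<union> b = ((A1 \<union> (A2 - A1)) \<inter> X) \<union> ((C1 \<union> (C2 - C1)) - X)" using AC by auto
  have tr1: "(A2 - A1) \<inter> X = A2 \<inter> X" and tr2: "(C2 - C1) - X = C2 - X" using AC disj by auto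
  have "adjoined_measure (a \<union> b) = inner ((A1 \<union> (A2 - A1)) \<inter> X) + outer (C1 \<union> (C2 - C1))"
    unfolding ab by (rule adjoined_measure_eq) (use AC Un_in Diff_in in auto)
  also have "inner ((A1 \<union> (A2 - A1)) \<inter> X) = inner (A1 \<inter> X) + inner (A2 \<inter> X)"
    using inner_trace_Un[OF AC(1) Diff_in[OF AC(4) AC(1)]] tr1 by auto
  also have "outer (C1 \<union> (C2 - C1)) = outer C1 + outer C2"
    using outer_Un[OF AC(2) Diff_in[OF AC(5) AC(2)]] outer_cong[OF Diff_in[OF AC(5) AC(2)] AC(5) tr2]
    by auto
  finally show ?thesis using adjoined_measure_eq AC by simp
qed

lemma adjoined_measure_nonneg: "a \<in> adjoined_alg \<Longrightarrow> 0 \<le> adjoined_measure a"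
  unfolding adjoined_alg_def using adjoined_measure_eq inner_nonneg outer_nonneg by fastforce

lemma adjoined_measure_zero_iff:
  assumes a: "a \<in> adjoined_alg" shows "adjoined_measure a = 0 \<longleftrightarrow> finite a"
proof -
  obtain A C where AC: "A \<in> B" "C \<in> B" "a = (A \<inter> X) \<union> (C - X)"
    using a unfolding adjoined_alg_def by blast
  have val: "adjoined_measure a = inner (A \<inter> X) + outer C"
    using adjoined_measure_eq AC by simp
  show ?thesis
  proof
    assume fin: "finite a"
    hence finA: "finite (A \<inter> X)" and finC: "finite (C - X)" using AC by auto
    have CX: "C - X \<in> B" by (rule finite_in[OF finC]) (use sets_sub[OF AC(2)] in auto)
    have "outer C = outer (C - X)" by (rule outer_cong[OF AC(2) CX]) auto
    also have "\<dots> \<le> \<nu> (C - X)" unfolding outer_def using inner_nonneg by simp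
    also have "\<dots> = 0" using nu_finite[OF CX finC] .
    finally show "adjoined_measure a = 0"
      using val inner_finite[OF finA] outer_nonneg[OF AC(2)] by linarith
  next
    assume zero: "adjoined_measure a = 0"
    show "finite a"
    proof (rule ccontr)
      assume "infinite a"
      hence "infinite (A \<inter> X) \<or> infinite (C - X)" using AC by auto
      thus False
      proof
        assume "infinite (A \<inter> X)"
        then obtain b where b: "b \<in> B" "b \<subseteq> A \<inter> X" "infinite b"
          using infinite_trace[OF AC(1)] by auto
        have "0 < inner (A \<inter> X)" using inner_ge[OF b(1,2)] nu_pos[OF b(1,3)] by linarith
        thus False using zero val outer_nonneg[OF AC(2)] by linarith
      next
        assume "infinite (C - X)"
        thus False using outer_pos[OF AC(2)] zero val inner_nonneg[of "A \<inter> X"] by linarith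
      qed
    qed
  qed
qed

lemma extension_to_adjoined:
  "\<exists>\<nu>'. fin_add_measure (gen_alg D (B \<union> {X})) \<nu>' \<and>
        almost_strictly_positive (gen_alg D (B \<union> {X})) \<nu>' \<and> (\<forall>A\<in>B. \<nu>' A = \<nu> A)"
proof (intro exI[of _ adjoined_measure] conjI ballI)
  show "fin_add_measure (gen_alg D (B \<union> {X})) adjoined_measure"
    unfolding fin_add_measure_def
    using gen_alg_subset_adjoined_alg adjoined_measure_nonneg adjoined_measure_Un by blast
  show "almost_strictly_positive (gen_alg D (B \<union> {X})) adjoined_measure"
    unfolding almost_strictly_positive_def
    using gen_alg_subset_adjoined_alg adjoined_measure_zero_iff by blast
qed (rule adjoined_measure_extends)

end

section \<open>Choosing the selector\<close>

lemma card_less_b_dominated_image: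
  assumes "card_less_b B" shows "dominated (\<psi> ` B)"
proof (rule ccontr)
  assume "\<not> dominated (\<psi> ` B)"
  hence "(card_of B, card_of (\<psi> ` B)) \<in> ordLess"
    using assms unfolding card_less_b_def by blast
  hence "(card_of B, card_of B) \<in> ordLess"
    using ordLess_ordLeq_trans card_of_image by blast
  thus False using ordLess_irreflexive by blast
qed

lemma slowly_decreasing_ge_half:
  fixes a :: "nat \<Rightarrow> real"
  assumes decrease: "\<And>m. N \<le> m \<Longrightarrow> a m - a N / 2^(m+2) \<le> a (Suc m)"
    and nonneg: "0 \<le> a N" and "N \<le> n"
  shows "a N / 2 \<le> a n"
proof -
  have "a N * (1/2 + 1/2^(n+1)) \<le> a n"
    using \<open>N \<le> n\<close>
  proof (induction n rule: dec_induct)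
    case base
    have "1/2 + 1/2^(N+1) \<le> (1::real)" by (simp add: field_simps)
    thus ?case using nonneg by (simp add: mult_left_le)
  next
    case (step n)
    have "a N * (1/2 + 1/2^(Suc n+1)) = a N * (1/2 + 1/2^(n+1)) - a N / 2^(n+2)"
      by (simp add: field_simps)
    also have "\<dots> \<le> a (Suc n)" using step.IH decrease[OF step.hyps(1)] by linarith
    finally show ?case .
  qed
  moreover have "a N / 2 \<le> a N * (1/2 + 1/2^(n+1))" using nonneg by (simp add: field_simps)
  ultimately show ?thesis by linarith
qed

locale s_sequences = fa_prob_algebra +
  fixes S :: "nat \<Rightarrow> nat \<Rightarrow> 'a set"
  assumes S_in: "\<And>n k. S n k \<in> B" and S_Suc_subset: "\<And>n k. S n (Suc k) \<subseteq> S n k"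
    and S_Inter: "\<And>n. (\<Inter>k. S n k) = {}" and S_tendsto: "\<And>n. (\<lambda>k. \<nu> (S n k)) \<longlonglongrightarrow> 0"
begin

lemma S_antimono: "k \<le> k' \<Longrightarrow> S n k' \<subseteq> S n k"
  by (induction k' rule: dec_induct) (use S_Suc_subset in auto)

lemma nu_S_antimono: "k \<le> k' \<Longrightarrow> \<nu> (S n k') \<le> \<nu> (S n k)"
  by (rule nu_mono[OF S_in S_in S_antimono])

lemma exists_not_in_S: "\<exists>k. x \<notin> S n k"
  using S_Inter[of n] by auto

lemma exists_nu_S_le:
  assumes "0 < e" shows "\<exists>k. \<nu> (S n k) \<le> e"
proof -
  have "\<forall>\<^sub>F k in sequentially. \<nu> (S n k) < e"
    using order_tendstoD(2)[OF S_tendsto assms] .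
  then obtain k where "\<nu> (S n k) < e" by (auto simp: eventually_sequentially)
  thus ?thesis by (auto intro: less_imp_le)
qed

definition exit_index :: "nat \<Rightarrow> 'a \<Rightarrow> nat" where
  "exit_index n x = (LEAST k. x \<notin> S n k)"

lemma not_in_S_exit_index: "x \<notin> S n (exit_index n x)"
  unfolding exit_index_def by (rule LeastI_ex[OF exists_not_in_S])

lemma finite_Int_S_imp_disjoint:
  assumes "finite (A \<inter> S n k0)" shows "\<exists>k. A \<inter> S n k = {}"
proof -
  obtain K where K: "\<forall>x \<in> A \<inter> S n k0. exit_index n x \<le> K"
    using assms finite_nat_set_iff_bounded_le[of "exit_index n ` (A \<inter> S n k0)"] by auto
  have "A \<inter> S n (max k0 K) = {}"
  proof (rule ccontr)
    assume "A \<inter> S n (max k0 K) \<noteq> {}"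
    then obtain x where x: "x \<in> A" "x \<in> S n (max k0 K)" by auto
    hence "x \<in> A \<inter> S n k0" using S_antimono[of k0 "max k0 K" n] by auto
    hence "exit_index n x \<le> K" using K by blast
    hence "exit_index n x \<le> max k0 K" by linarith
    thus False using x not_in_S_exit_index[of x n] S_antimono by blast
  qed
  thus ?thesis by blast
qed

definition init_union :: "nat \<Rightarrow> (nat \<Rightarrow> nat) \<Rightarrow> 'a set" where
  "init_union j \<sigma> = (\<Union>i<j. S i (\<sigma> i))"

lemma init_union_in: "init_union j \<sigma> \<in> B"
  by (induction j) (auto simp: init_union_def lessThan_Suc empty_in Un_in S_in)

lemma init_union_Suc: "init_union (Suc j) \<sigma> = init_union j \<sigma> \<union> S j (\<sigma> j)"
  by (auto simp: init_union_def lessThan_Suc)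

lemma init_union_mono: "j \<le> j' \<Longrightarrow> init_union j \<sigma> \<subseteq> init_union j' \<sigma>"
  unfolding init_union_def by (fastforce intro: less_le_trans)

lemma init_union_restrict: "init_union L (restrict \<sigma> {..<L}) = init_union L \<sigma>"
  unfolding init_union_def by auto

definition halving_index :: "nat \<Rightarrow> nat" where
  "halving_index m = (LEAST k. \<nu> (S m k) \<le> 1 / 2^(m+2))"

text \<open>
  Indices that a selector \<open>g\<close> has to reach at level \<open>m\<close> for the set \<open>C\<close>, the last two relative
  to an initial segment \<open>\<sigma>\<close> of \<open>g\<close>; they are \<open>0\<close> when their defining condition fails.
\<close>

definition disjoint_index :: "'a set \<Rightarrow> nat \<Rightarrow> nat" where
  "disjoint_index C m = (if \<exists>k. C \<inter> S m k = {} then LEAST k. C \<inter> S m k = {} else 0)"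

definition small_index :: "'a set \<Rightarrow> nat \<Rightarrow> (nat \<Rightarrow> nat) \<Rightarrow> nat" where
  "small_index C m \<sigma> = (if infinite (C - init_union m \<sigma>)
     then LEAST k. \<nu> (S m k) \<le> \<nu> (C - init_union m \<sigma>) / 2^(m+2) else 0)"

definition witness :: "'a set \<Rightarrow> nat \<Rightarrow> (nat \<Rightarrow> nat) \<Rightarrow> 'a" where
  "witness C L \<sigma> = (SOME x. x \<in> C - init_union L \<sigma>)"

definition avoid_index :: "'a set \<Rightarrow> nat \<Rightarrow> nat \<Rightarrow> (nat \<Rightarrow> nat) \<Rightarrow> nat" where
  "avoid_index C m L \<sigma> = (if infinite (C - init_union L \<sigma>) then exit_index m (witness C L \<sigma>) else 0)"

text \<open>
  Since \<open>g\<close> is not known in advance, all its possible initial segments with values at most \<open>v\<close>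
  are taken into account; a monotone \<open>g\<close> with \<open>requirement C (Suc n) (g n) \<le> g (Suc n)\<close> then meets
  the requirements at level \<open>Suc n\<close> for its own initial segments.
\<close>

definition requirement :: "'a set \<Rightarrow> nat \<Rightarrow> nat \<Rightarrow> nat" where
  "requirement C m v = disjoint_index C m
     + (\<Sum>\<sigma> \<in> PiE {..<m} (\<lambda>_. {..v}). small_index C m \<sigma>)
     + (\<Sum>L\<le>m. \<Sum>\<sigma> \<in> PiE {..<L} (\<lambda>_. {..v}). avoid_index C m L \<sigma>)"

lemma nu_S_le_halving:
  assumes "halving_index m \<le> k" shows "\<nu> (S m k) \<le> 1 / 2^(m+2)"
proof -
  have "\<nu> (S m (halving_index m)) \<le> 1 / 2^(m+2)"
    unfolding halving_index_def by (rule LeastI_ex[OF exists_nu_S_le]) simp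
  thus ?thesis using nu_S_antimono[OF assms, of m] by linarith
qed

lemma disjoint_index_le:
  assumes "\<exists>k. C \<inter> S m k = {}" "disjoint_index C m \<le> k" shows "C \<inter> S m k = {}"
proof -
  have "C \<inter> S m (disjoint_index C m) = {}"
    unfolding disjoint_index_def using LeastI_ex[OF assms(1)] assms(1) by simp
  thus ?thesis using S_antimono[OF assms(2)] by blast
qed

lemma small_index_le:
  assumes C: "C \<in> B" and inf: "infinite (C - init_union m \<sigma>)" and k: "small_index C m \<sigma> \<le> k"
  shows "\<nu> (S m k) \<le> \<nu> (C - init_union m \<sigma>) / 2^(m+2)"
proof -
  have "0 < \<nu> (C - init_union m \<sigma>) / 2^(m+2)"
    using nu_pos[OF Diff_in[OF C init_union_in] inf] by simp
  from LeastI_ex[OF exists_nu_S_le[OF this]]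
  have "\<nu> (S m (small_index C m \<sigma>)) \<le> \<nu> (C - init_union m \<sigma>) / 2^(m+2)"
    unfolding small_index_def using inf by simp
  thus ?thesis using nu_S_antimono[OF k, of m] by linarith
qed

lemma witness_in: "infinite (C - init_union L \<sigma>) \<Longrightarrow> witness C L \<sigma> \<in> C - init_union L \<sigma>"
  unfolding witness_def by (rule someI_ex) (metis finite.emptyI ex_in_conv)

lemma requirement_ge:
  assumes "L \<le> m" "\<sigma> \<in> PiE {..<L} (\<lambda>_. {..v})" "\<tau> \<in> PiE {..<m} (\<lambda>_. {..v})"
  shows "disjoint_index C m \<le> requirement C m v"
    and "small_index C m \<tau> \<le> requirement C m v"
    and "avoid_index C m L \<sigma> \<le> requirement C m v"
proof -
  show "disjoint_index C m \<le> requirement C m v" unfolding requirement_def by simp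
  have "small_index C m \<tau> \<le> (\<Sum>\<sigma> \<in> PiE {..<m} (\<lambda>_. {..v}). small_index C m \<sigma>)"
    by (rule member_le_sum) (use assms in \<open>auto intro: finite_PiE\<close>)
  thus "small_index C m \<tau> \<le> requirement C m v" unfolding requirement_def by simp
  have "avoid_index C m L \<sigma> \<le> (\<Sum>\<sigma> \<in> PiE {..<L} (\<lambda>_. {..v}). avoid_index C m L \<sigma>)"
    by (rule member_le_sum) (use assms in \<open>auto intro: finite_PiE\<close>)
  also have "\<dots> \<le> (\<Sum>L\<le>m. \<Sum>\<sigma> \<in> PiE {..<L} (\<lambda>_. {..v}). avoid_index C m L \<sigma>)"
    by (rule member_le_sum[where f = "\<lambda>L. \<Sum>\<sigma> \<in> PiE {..<L} (\<lambda>_. {..v}). avoid_index C m L \<sigma>"])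
       (use assms in auto)
  finally show "avoid_index C m L \<sigma> \<le> requirement C m v" unfolding requirement_def by simp
qed

lemma exists_selector:
  assumes "card_less_b B"
  shows "\<exists>g. mono g \<and> (\<forall>m. halving_index m \<le> g m) \<and>
             (\<forall>C\<in>B. \<exists>N. \<forall>n\<ge>N. requirement C (Suc n) (g n) \<le> g (Suc n))"
proof -
  obtain h where h: "\<forall>C\<in>B. \<exists>N. \<forall>w\<ge>N. (\<Sum>m\<le>w. \<Sum>v\<le>w. requirement C m v) \<le> h w"
    using card_less_b_dominated_image[OF assms, of "\<lambda>C w. \<Sum>m\<le>w. \<Sum>v\<le>w. requirement C m v"]
    unfolding dominated_def by auto
  define g where "g = rec_nat (halving_index 0) (\<lambda>n gn. h (gn + Suc n) + halving_index (Suc n) + gn + 1)"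
  have g0: "g 0 = halving_index 0"
    and gSuc: "\<And>n. g (Suc n) = h (g n + Suc n) + halving_index (Suc n) + g n + 1"
    unfolding g_def by simp_all
  have "mono g" by (rule incseq_SucI) (simp add: gSuc)
  moreover have "\<forall>m. halving_index m \<le> g m"
    by (intro allI, case_tac m) (simp_all add: g0 gSuc)
  moreover have "\<exists>N. \<forall>n\<ge>N. requirement C (Suc n) (g n) \<le> g (Suc n)" if C: "C \<in> B" for C
  proof -
    obtain N where N: "\<forall>w\<ge>N. (\<Sum>m\<le>w. \<Sum>v\<le>w. requirement C m v) \<le> h w" using h C by auto
    have "requirement C (Suc n) (g n) \<le> g (Suc n)" if "N \<le> n" for n
    proof -
      let ?w = "g n + Suc n"
      have "requirement C (Suc n) (g n) \<le> (\<Sum>v\<le>?w. requirement C (Suc n) v)"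
        by (rule member_le_sum[where f = "requirement C (Suc n)"]) auto
      also have "\<dots> \<le> (\<Sum>m\<le>?w. \<Sum>v\<le>?w. requirement C m v)"
        by (rule member_le_sum[where f = "\<lambda>m. \<Sum>v\<le>?w. requirement C m v"]) auto
      also have "\<dots> \<le> h ?w" using N that by (simp del: sum.atMost_Suc add_Suc_right)
      finally show ?thesis using gSuc[of n] by linarith
    qed
    thus ?thesis by blast
  qed
  ultimately show ?thesis by blast
qed

end

locale selector = s_sequences +
  fixes g :: "nat \<Rightarrow> nat"
  assumes mono_g: "mono g" and halving_le_g: "\<And>m. halving_index m \<le> g m"
    and requirement_le_g: "\<And>C. C \<in> B \<Longrightarrow> \<exists>N. \<forall>n\<ge>N. requirement C (Suc n) (g n) \<le> g (Suc n)"
begin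

definition X :: "'a set" where
  "X = (\<Union>n. S n (g n))"

lemma X_sub: "X \<subseteq> D"
  unfolding X_def using sets_sub[OF S_in] by blast

lemma init_union_sub_X: "init_union j g \<subseteq> X"
  unfolding init_union_def X_def by auto

lemma prefix_in_PiE: "L \<le> Suc n \<Longrightarrow> restrict g {..<L} \<in> PiE {..<L} (\<lambda>_. {..g n})"
  using mono_g unfolding mono_def by auto

lemma requirements_met:
  assumes "C \<in> B"
  shows "\<exists>N. \<forall>m>N. disjoint_index C m \<le> g m \<and> small_index C m (restrict g {..<m}) \<le> g m \<and>
                  (\<forall>L\<le>m. avoid_index C m L (restrict g {..<L}) \<le> g m)"
proof -
  obtain N where N: "\<forall>n\<ge>N. requirement C (Suc n) (g n) \<le> g (Suc n)"
    using requirement_le_g[OF assms] by auto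
  have "disjoint_index C m \<le> g m \<and> small_index C m (restrict g {..<m}) \<le> g m \<and>
        (\<forall>L\<le>m. avoid_index C m L (restrict g {..<L}) \<le> g m)" if "N < m" for m
  proof -
    obtain n where n: "m = Suc n" "N \<le> n" using \<open>N < m\<close> by (cases m) auto
    have req: "requirement C m (g n) \<le> g m" using N n by auto
    have prefix: "restrict g {..<L} \<in> PiE {..<L} (\<lambda>_. {..g n})" if "L \<le> m" for L
      using prefix_in_PiE that n(1) by simp
    note ge = requirement_ge[OF _ prefix prefix[OF order_refl], of _ C]
    show ?thesis using ge(1,2)[OF order_refl order_refl] ge(3) req by (meson order_trans)
  qed
  thus ?thesis by blast
qed

lemma eventually_disjoint:
  assumes "C \<in> B" "\<And>m. \<exists>k. C \<inter> S m k = {}" shows "\<exists>N. \<forall>m>N. C \<inter> S m (g m) = {}"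
  using requirements_met[OF assms(1)] disjoint_index_le[OF assms(2)] by metis

lemma eventually_small:
  assumes C: "C \<in> B"
  shows "\<exists>N. \<forall>m>N. infinite (C - init_union m g) \<longrightarrow>
                   \<nu> (S m (g m)) \<le> \<nu> (C - init_union m g) / 2^(m+2)"
  using requirements_met[OF C] small_index_le[OF C] init_union_restrict by metis

lemma eventually_avoids:
  assumes C: "C \<in> B"
  shows "\<exists>N. \<forall>m>N. \<forall>L\<le>m. infinite (C - init_union L g) \<longrightarrow>
                   witness C L (restrict g {..<L}) \<notin> S m (g m)"
proof -
  obtain N where N: "\<forall>m>N. \<forall>L\<le>m. avoid_index C m L (restrict g {..<L}) \<le> g m"
    using requirements_met[OF C] by blast
  have "witness C L (restrict g {..<L}) \<notin> S m (g m)"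
    if "N < m" "L \<le> m" "infinite (C - init_union L g)" for m L
  proof -
    have "avoid_index C m L (restrict g {..<L}) \<le> g m" using N that by blast
    hence "exit_index m (witness C L (restrict g {..<L})) \<le> g m"
      unfolding avoid_index_def init_union_restrict using that(3) by simp
    thus ?thesis using not_in_S_exit_index S_antimono by blast
  qed
  thus ?thesis by blast
qed

lemma subset_X_almost_in_init_union:
  assumes e: "e \<in> B" and eX: "e \<subseteq> X" shows "\<exists>j. finite (e - init_union j g)"
proof (rule ccontr)
  assume "\<nexists>j. finite (e - init_union j g)"
  hence inf: "infinite (e - init_union j g)" for j by blast
  obtain N where N: "\<forall>m>N. \<forall>L\<le>m. infinite (e - init_union L g) \<longrightarrow>
                        witness e L (restrict g {..<L}) \<notin> S m (g m)"
    using eventually_avoids[OF e] by blast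
  define L where "L = Suc N"
  define x where "x = witness e L (restrict g {..<L})"
  have "x \<in> e - init_union L g"
    unfolding x_def using witness_in[of e L "restrict g {..<L}"] inf[of L]
    by (simp add: init_union_restrict)
  then obtain m where m: "x \<in> S m (g m)" "x \<notin> init_union L g"
    using eX unfolding X_def by blast
  show False
  proof (cases "m < L")
    case True thus False using m unfolding init_union_def by blast
  next
    case False thus False using N m(1) inf[of L] unfolding x_def L_def by auto
  qed
qed

lemma nu_Diff_init_union_Suc:
  assumes C: "C \<in> B" shows "\<nu> (C - init_union j g) - \<nu> (S j (g j)) \<le> \<nu> (C - init_union (Suc j) g)"
proof -
  have "C - init_union (Suc j) g = (C - init_union j g) - S j (g j)"
    using init_union_Suc by auto
  thus ?thesis using nu_Diff_ge[OF Diff_in[OF C init_union_in] S_in] by simp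
qed

lemma nu_Diff_init_union_antimono:
  "C \<in> B \<Longrightarrow> j \<le> j' \<Longrightarrow> \<nu> (C - init_union j' g) \<le> \<nu> (C - init_union j g)"
  by (rule nu_mono) (use init_union_mono[of j j' g] in \<open>auto intro: Diff_in init_union_in\<close>)

lemma nu_Diff_init_union_bounded_below:
  assumes C: "C \<in> B" and inf: "infinite (C - X)"
  shows "\<exists>\<delta>>0. \<forall>j. \<delta> \<le> \<nu> (C - init_union j g)"
proof -
  define a where "a j = \<nu> (C - init_union j g)" for j
  have inf_j: "infinite (C - init_union j g)" for j
    using inf init_union_sub_X[of j] by (meson Diff_mono finite_subset order_refl)
  obtain N where N: "\<forall>m>N. \<nu> (S m (g m)) \<le> a m / 2^(m+2)"
    using eventually_small[OF C] inf_j unfolding a_def by blast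
  have anti: "a j' \<le> a j" if "j \<le> j'" for j j'
    unfolding a_def using nu_Diff_init_union_antimono[OF C that] .
  have pos: "0 < a (Suc N)"
    unfolding a_def by (rule nu_pos[OF Diff_in[OF C init_union_in] inf_j])
  have step: "a m - a (Suc N) / 2^(m+2) \<le> a (Suc m)" if "Suc N \<le> m" for m
  proof -
    have "\<nu> (S m (g m)) \<le> a (Suc N) / 2^(m+2)"
      using N that anti[OF that] by (smt (verit) Suc_le_lessD divide_right_mono zero_le_power)
    thus ?thesis using nu_Diff_init_union_Suc[OF C, of m] unfolding a_def by linarith
  qed
  have "a (Suc N) / 2 \<le> a j" for j
  proof (cases "j \<le> Suc N")
    case True thus ?thesis using anti[OF True] pos by linarith
  next
    case False thus ?thesis using slowly_decreasing_ge_half[OF step] pos by simp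
  qed
  moreover have "0 < a (Suc N) / 2" using pos by simp
  ultimately show ?thesis unfolding a_def by blast
qed

lemma nu_init_union_le: "\<nu> (init_union j g) \<le> 1/2 - 1/2^(j+1)"
proof (induction j)
  case 0 thus ?case using nu_finite[OF empty_in] by (simp add: init_union_def)
next
  case (Suc j)
  have "\<nu> (init_union (Suc j) g) \<le> \<nu> (init_union j g) + \<nu> (S j (g j))"
    unfolding init_union_Suc by (rule nu_subadditive[OF init_union_in S_in])
  moreover have "\<nu> (S j (g j)) \<le> 1/2^(j+2)" by (rule nu_S_le_halving[OF halving_le_g])
  moreover have "(1::real)/2 - 1/2^(j+1) + 1/2^(j+2) = 1/2 - 1/2^(Suc j + 1)"
    by (simp add: field_simps)
  ultimately show ?case using Suc.IH by linarith
qed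

lemma infinite_D_minus_X: "infinite (D - X)"
proof
  assume fin: "finite (D - X)"
  define e where "e = D - (D - X)"
  have e: "e \<in> B" unfolding e_def by (rule Diff_in[OF space_in finite_in[OF fin]]) auto
  then obtain j where j: "finite (e - init_union j g)"
    using subset_X_almost_in_init_union unfolding e_def by blast
  have "D - init_union j g \<subseteq> (e - init_union j g) \<union> (D - X)" unfolding e_def by auto
  hence "\<nu> (D - init_union j g) = 0"
    using j fin finite_subset nu_finite[OF Diff_in[OF space_in init_union_in]] by (metis finite_UnI)
  moreover have "1 - \<nu> (init_union j g) \<le> \<nu> (D - init_union j g)"
    using nu_Diff_ge[OF space_in init_union_in] prob by simp
  moreover have "(0::real) < 1/2^(j+1)" by simp
  ultimately show False using nu_init_union_le[of j] by linarith
qed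

lemma infinite_trace_X:
  assumes A: "A \<in> B" and inf: "infinite (A \<inter> X)"
  shows "\<exists>b\<in>B. b \<subseteq> A \<inter> X \<and> infinite b"
proof (cases "\<exists>m. \<forall>k. infinite (A \<inter> S m k)")
  case True
  then obtain m where "infinite (A \<inter> S m (g m))" by auto
  moreover have "A \<inter> S m (g m) \<subseteq> A \<inter> X" unfolding X_def by auto
  ultimately show ?thesis using Int_in[OF A S_in] by blast
next
  case False
  \<comment> \<open>then \<open>A \<inter> X\<close> is already contained in an initial union\<close>
  hence "\<And>m. \<exists>k. A \<inter> S m k = {}" using finite_Int_S_imp_disjoint by blast
  then obtain N where N: "\<forall>m>N. A \<inter> S m (g m) = {}" using eventually_disjoint[OF A] by blast
  have "A \<inter> X \<subseteq> init_union (Suc N) g"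
  proof
    fix x assume x: "x \<in> A \<inter> X"
    then obtain m where m: "x \<in> S m (g m)" unfolding X_def by blast
    have "m < Suc N"
    proof (rule ccontr)
      assume "\<not> m < Suc N"
      hence "A \<inter> S m (g m) = {}" using N by (simp add: not_less_eq)
      thus False using x m by blast
    qed
    thus "x \<in> init_union (Suc N) g" using m unfolding init_union_def by blast
  qed
  hence "A \<inter> X = A \<inter> init_union (Suc N) g" using init_union_sub_X by blast
  thus ?thesis using inf Int_in[OF A init_union_in] by auto
qed

lemma inner_gap_X:
  assumes C: "C \<in> B" and inf: "infinite (C - X)"
  shows "\<exists>\<delta>>0. \<forall>e\<in>B. e \<subseteq> C \<inter> X \<longrightarrow> \<nu> e \<le> \<nu> C - \<delta>"
proof -
  obtain \<delta> where \<delta>: "\<delta> > 0" "\<And>j. \<delta> \<le> \<nu> (C - init_union j g)"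
    using nu_Diff_init_union_bounded_below[OF C inf] by auto
  have "\<nu> e \<le> \<nu> C - \<delta>" if e: "e \<in> B" "e \<subseteq> C \<inter> X" for e
  proof -
    have "e \<subseteq> X" using e(2) by blast
    then obtain j where j: "finite (e - init_union j g)"
      using subset_X_almost_in_init_union[OF e(1)] by blast
    have "\<nu> e = \<nu> (e \<inter> init_union j g) + \<nu> (e - init_union j g)"
      by (rule nu_split[OF e(1) init_union_in])
    also have "\<nu> (e - init_union j g) = 0"
      using nu_finite[OF Diff_in[OF e(1) init_union_in] j] .
    also have "\<nu> (e \<inter> init_union j g) \<le> \<nu> (C \<inter> init_union j g)"
      by (rule nu_mono) (use e in \<open>auto intro: Int_in init_union_in C\<close>)
    also have "\<nu> (C \<inter> init_union j g) = \<nu> C - \<nu> (C - init_union j g)"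
      using nu_split[OF C init_union_in, of j g] by simp
    finally show ?thesis using \<delta>(2)[of j] by linarith
  qed
  thus ?thesis using \<delta>(1) by blast
qed

end

theorem lemma4p3:
  fixes D :: "(nat \<Rightarrow> bool) set"
    and B :: "(nat \<Rightarrow> bool) set set"
    and \<nu> :: "(nat \<Rightarrow> bool) set \<Rightarrow> real"
    and S :: "nat \<Rightarrow> nat \<Rightarrow> (nat \<Rightarrow> bool) set"
  assumes "countable D" and "closure D = UNIV"
    and "is_alg D B" and "card_less_b B" and "A0 D \<subseteq> B"
    and "fin_add_measure B \<nu>" and "almost_strictly_positive B \<nu>" and "\<nu> D = 1"
    and "\<forall>A\<in>A0 D. \<nu> A = mu0 D A"
    and "s_family D S"
  shows "\<exists>g::nat \<Rightarrow> nat. infinite (D - (\<Union>n. S n (g n))) \<and>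
           (\<exists>\<nu>'. fin_add_measure (gen_alg D (B \<union> {\<Union>n. S n (g n)})) \<nu>' \<and>
                 almost_strictly_positive (gen_alg D (B \<union> {\<Union>n. S n (g n)})) \<nu>' \<and>
                 (\<forall>A\<in>B. \<nu>' A = \<nu> A))"
proof -
  note S = \<open>s_family D S\<close>[unfolded s_family_def]
  have S_A0: "S n k \<in> A0 D" for n k using S by blast
  interpret s_sequences D B \<nu> S
  proof
    show "F \<in> B" if "finite F" "F \<subseteq> D" for F
    proof -
      have "F \<in> A0 D" unfolding A0_def by (rule subsetD[OF gen_alg_superset]) (use that in blast)
      thus ?thesis using \<open>A0 D \<subseteq> B\<close> by blast
    qed
    show "S n k \<in> B" for n k using S_A0 \<open>A0 D \<subseteq> B\<close> by blast
    show "S n (Suc k) \<subseteq> S n k" "(\<Inter>k. S n k) = {}" for n k using S by auto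
    have "\<nu> (S n k) = mu0 D (S n k)" for n k using S_A0 assms(9) by blast
    thus "(\<lambda>k. \<nu> (S n k)) \<longlonglongrightarrow> 0" for n using S by presburger
  qed (fact assms)+
  obtain g where g: "mono g" "\<And>m. halving_index m \<le> g m"
    "\<And>C. C \<in> B \<Longrightarrow> \<exists>N. \<forall>n\<ge>N. requirement C (Suc n) (g n) \<le> g (Suc n)"
    using exists_selector[OF \<open>card_less_b B\<close>] by blast
  interpret selector D B \<nu> S g
    by unfold_locales (fact g)+
  interpret adjoinable D B \<nu> X
    by unfold_locales (fact X_sub infinite_trace_X inner_gap_X)+
  show ?thesis using infinite_D_minus_X extension_to_adjoined unfolding X_def by blast
qed

end
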